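(* There exist absolute constants $c_1,c_2,C_0>0$ such that the following holds. Suppose $\delta\le e^{-1}$, $C_{n,\delta}\ge c_1\log(n/\delta)$, and $k\ge c_2\, b\,(C_{n,\delta}+1)\max\{\Omega_{\max},E_{\max}\}$. Then with probability at least $1-\delta$, for all pairs $i,j\in\{1,\dots,n\}$, $$\|\Delta\|_{(i,j)}^2\le C_0\,\Omega_{ij}\,|E_{ij}|\,\frac{b^2C_{n,\delta}^2}{k^2}.$$
   Context: $G=(V,E)$ is an undirected connected graph on $V=\{1,\dots,n\}$, each edge with a fixed orientation $(i,j)$; $B$ is the incidence matrix (column of edge $(i,j)$ has $+1$ in row $i$, $-1$ in row $j$), $L=BB^T$, $L^\dagger$ its Moore–Penrose pseudoinverse. Weights $w$ are positive with $b\ge\max_{i,j}w_i/w_j$. For each edge $(i,j)$, $k$ independent comparisons are made, $i$ winning each with probability $p_{ij}=w_i/(w_i+w_j)$ (independent across edges); $F_{ij}$ is the fraction won by $i$, $F_{ji}=1-F_{ij}$, $R_{ij}=F_{ij}/F_{ji}$, $\rho_{ij}=w_i/w_j$, $v_{ij}=\rho_{ij}+2+\rho_{ij}^{-1}$; $F,p,R,\rho\in\mathbb{R}^{|E|}$ stack these over edges, $V=\mathrm{diag}(v_{ij})$, and $\Delta:=\log R-\log\rho-V(F-p)$. For $Q_{ij}=(e_i-e_j)(e_i-e_j)^T$, $\|x\|_{(i,j)}^2=x^TB^TL^\dagger Q_{ij}L^\dagger Bx$. $\Omega_{ij}=(e_i-e_j)^TL^\dagger(e_i-e_j)$ is the effective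 resistance, $\Omega_{\max}=\max_{i,j}\Omega_{ij}$; $E_{ij}$ is the set of edges on at least one simple path from $i$ to $j$, $E_{\max}=\max_{i,j}|E_{ij}|$. $C_{n,\delta}$ is a parameter. *)

theory Defs
  imports "HOL-Probability.Probability"
begin

(* Real n x n matrices are functions nat => nat => real, relevant on {1..n}^2;
   vectors indexed by edges are functions (nat * nat) => real, relevant on E. *)

definition verts :: "nat \<Rightarrow> nat set" where
  "verts n = {1..n}"

(* undirected simple graph on {1..n} with a fixed orientation of every edge *)
definition oriented_simple_graph :: "nat \<Rightarrow> (nat \<times> nat) set \<Rightarrow> bool" where
  "oriented_simple_graph n E \<longleftrightarrow> E \<subseteq> verts n \<times> verts n \<and>
     (\<forall>(i,j)\<in>E. i \<noteq> j \<and> (j,i) \<notin> E)"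

definition adj :: "(nat \<times> nat) set \<Rightarrow> nat \<Rightarrow> nat \<Rightarrow> bool" where
  "adj E u v \<longleftrightarrow> (u,v) \<in> E \<or> (v,u) \<in> E"

definition graph_connected :: "nat \<Rightarrow> (nat \<times> nat) set \<Rightarrow> bool" where
  "graph_connected n E \<longleftrightarrow>
     (\<forall>i\<in>verts n. \<forall>j\<in>verts n. (i,j) \<in> {(u,v). adj E u v}\<^sup>*)"

definition incidence :: "(nat \<times> nat) set \<Rightarrow> nat \<Rightarrow> nat \<times> nat \<Rightarrow> real" where
  "incidence E u e = (if e \<in> E then (if u = fst e then 1 else if u = snd e then -1 else 0) else 0)"

definition laplacian :: "(nat \<times> nat) set \<Rightarrow> nat \<Rightarrow> nat \<Rightarrow> real" where
  "laplacian E u v = (\<Sum>e\<in>E. incidence E u e * incidence E v e)"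

definition mmul :: "nat \<Rightarrow> (nat \<Rightarrow> nat \<Rightarrow> real) \<Rightarrow> (nat \<Rightarrow> nat \<Rightarrow> real) \<Rightarrow> nat \<Rightarrow> nat \<Rightarrow> real" where
  "mmul n A C i j = (\<Sum>k\<in>verts n. A i k * C k j)"

definition mtrans :: "(nat \<Rightarrow> nat \<Rightarrow> real) \<Rightarrow> nat \<Rightarrow> nat \<Rightarrow> real" where
  "mtrans A i j = A j i"

definition is_pinv :: "nat \<Rightarrow> (nat \<Rightarrow> nat \<Rightarrow> real) \<Rightarrow> (nat \<Rightarrow> nat \<Rightarrow> real) \<Rightarrow> bool" where
  "is_pinv n A X \<longleftrightarrow>
     (\<forall>i j. (i \<notin> verts n \<or> j \<notin> verts n) \<longrightarrow> X i j = 0) \<and>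
     (\<forall>i\<in>verts n. \<forall>j\<in>verts n.
        mmul n (mmul n A X) A i j = A i j \<and>
        mmul n (mmul n X A) X i j = X i j \<and>
        mtrans (mmul n A X) i j = mmul n A X i j \<and>
        mtrans (mmul n X A) i j = mmul n X A i j)"

definition pinv :: "nat \<Rightarrow> (nat \<Rightarrow> nat \<Rightarrow> real) \<Rightarrow> nat \<Rightarrow> nat \<Rightarrow> real" where
  "pinv n A = (THE X. is_pinv n A X)"

definition ediff :: "nat \<Rightarrow> nat \<Rightarrow> nat \<Rightarrow> real" where
  "ediff i j u = (if u = i then 1 else 0) - (if u = j then 1 else 0)"

definition Qmat :: "nat \<Rightarrow> nat \<Rightarrow> nat \<Rightarrow> nat \<Rightarrow> real" where
  "Qmat i j s t = ediff i j s * ediff i j t"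

definition Bvec :: "(nat \<times> nat) set \<Rightarrow> ((nat \<times> nat) \<Rightarrow> real) \<Rightarrow> nat \<Rightarrow> real" where
  "Bvec E x u = (\<Sum>e\<in>E. incidence E u e * x e)"

definition pair_seminorm_sq :: "nat \<Rightarrow> (nat \<times> nat) set \<Rightarrow> nat \<Rightarrow> nat \<Rightarrow> ((nat \<times> nat) \<Rightarrow> real) \<Rightarrow> real" where
  "pair_seminorm_sq n E i j x =
     (let Lp = pinv n (laplacian E); a = Bvec E x; M = mmul n (mmul n Lp (Qmat i j)) Lp
      in \<Sum>u\<in>verts n. \<Sum>v\<in>verts n. a u * M u v * a v)"

definition eff_res :: "nat \<Rightarrow> (nat \<times> nat) set \<Rightarrow> nat \<Rightarrow> nat \<Rightarrow> real" where
  "eff_res n E i j = (\<Sum>s\<in>verts n. \<Sum>t\<in>verts n. ediff i j s * pinv n (laplacian E) s t * ediff i j t)"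

definition eff_res_max :: "nat \<Rightarrow> (nat \<times> nat) set \<Rightarrow> real" where
  "eff_res_max n E = Max {eff_res n E i j | i j. i \<in> verts n \<and> j \<in> verts n}"

definition simple_path :: "(nat \<times> nat) set \<Rightarrow> nat \<Rightarrow> nat \<Rightarrow> nat list \<Rightarrow> bool" where
  "simple_path E i j ps \<longleftrightarrow> ps \<noteq> [] \<and> hd ps = i \<and> last ps = j \<and> distinct ps \<and>
     (\<forall>m. Suc m < length ps \<longrightarrow> adj E (ps ! m) (ps ! Suc m))"

definition edge_on_path :: "nat list \<Rightarrow> nat \<times> nat \<Rightarrow> bool" where
  "edge_on_path ps e \<longleftrightarrow> (\<exists>m. Suc m < length ps \<and>
     ((ps ! m, ps ! Suc m) = e \<or> (ps ! Suc m, ps ! m) = e))"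

definition path_edges :: "(nat \<times> nat) set \<Rightarrow> nat \<Rightarrow> nat \<Rightarrow> (nat \<times> nat) set" where
  "path_edges E i j = {e \<in> E. \<exists>ps. simple_path E i j ps \<and> edge_on_path ps e}"

definition path_edges_max :: "nat \<Rightarrow> (nat \<times> nat) set \<Rightarrow> nat" where
  "path_edges_max n E = Max {card (path_edges E i j) | i j. i \<in> verts n \<and> j \<in> verts n}"

definition Delta :: "(nat \<Rightarrow> real) \<Rightarrow> nat \<Rightarrow> ((nat \<times> nat) \<Rightarrow> nat) \<Rightarrow> nat \<times> nat \<Rightarrow> real" where
  "Delta w k X e =
     (let i = fst e; j = snd e;
          F = real (X e) / real k; p = w i / (w i + w j);
          R = F / (1 - F); \<rho> = w i / w j; v = \<rho> + 2 + 1 / \<rho>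
      in ln R - ln \<rho> - v * (F - p))"

definition comparisons :: "(nat \<times> nat) set \<Rightarrow> (nat \<Rightarrow> real) \<Rightarrow> nat \<Rightarrow> ((nat \<times> nat) \<Rightarrow> nat) pmf" where
  "comparisons E w k = Pi_pmf E 0 (\<lambda>e. binomial_pmf k (w (fst e) / (w (fst e) + w (snd e))))"

end

theory Submission
  imports Defs "Jordan_Normal_Form.Determinant"
begin

text \<open>A variance-sensitive Chernoff bound
  and a union bound over the edges show that, with probability at least \<open>1 - \<delta>\<close>, every count
  deviates from its mean \<open>k p\<^sub>e\<close> by at most \<open>2 (k p\<^sub>e (1 - p\<^sub>e) L)\<^sup>1\<^sup>/\<^sup>2\<close>, where
  \<open>L = ln (2 n\<^sup>2/\<delta>) \<le> 3 C\<close>. On this event a second-order Taylor bound for the logit gives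
  \<open>|\<Delta>\<^sub>e| \<le> 192 b C / k\<close> on every edge, since \<open>p\<^sub>e (1 - p\<^sub>e) \<ge> 1/(4b)\<close>.

  Deterministically, \<open>\<parallel>x\<parallel>\<^sub>(\<^sub>i\<^sub>,\<^sub>j\<^sub>)\<^sup>2 = (\<Sum>\<^sub>e x\<^sub>e \<nabla>\<phi>\<^sub>e)\<^sup>2\<close> for the electrical potential
  \<open>\<phi> = L\<^sup>\<dagger>(e\<^sub>i - e\<^sub>j)\<close>, and \<open>\<Sum>\<^sub>e (\<nabla>\<phi>\<^sub>e)\<^sup>2 = \<Omega>\<^sub>i\<^sub>j\<close>. Current only flows along edges that lie on
  a simple path from \<open>i\<close> to \<open>j\<close>, so Cauchy-Schwarz over \<open>E\<^sub>i\<^sub>j\<close> bounds the seminorm by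
  \<open>\<Omega>\<^sub>i\<^sub>j |E\<^sub>i\<^sub>j| max\<^sub>e \<Delta>\<^sub>e\<^sup>2\<close>.\<close>

section \<open>Binomial concentration\<close>

lemma exp_le_one_add_self_add_square:
  fixes y :: real assumes "\<bar>y\<bar> \<le> 1" shows "exp y \<le> 1 + y + y\<^sup>2"
proof -
  obtain t where t: "\<bar>t\<bar> \<le> \<bar>y\<bar>" "exp y = (\<Sum>m<3. y^m / fact m) + exp t / fact 3 * y^3"
    using Maclaurin_exp_le[of y 3] by blast
  have taylor2: "(\<Sum>m<3. y^m / fact m) = 1 + y + y\<^sup>2/2"
    by (simp add: eval_nat_numeral fact_numeral power2_eq_square)
  have "exp t \<le> exp 1" using t assms by simp
  also have "\<dots> \<le> 3" using exp_le by simp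
  finally have "exp t \<le> 3" .
  have "exp t / fact 3 * y^3 \<le> exp t / 6 * \<bar>y\<bar>^3"
    by (simp add: fact_numeral power_abs abs_mult) (metis abs_ge_self abs_mult abs_of_pos exp_gt_zero power_abs)
  also have "\<dots> = exp t / 6 * (\<bar>y\<bar> * y\<^sup>2)"
    by (simp add: power2_eq_square power3_eq_cube abs_mult)
  also have "\<dots> \<le> 3 / 6 * (\<bar>y\<bar> * y\<^sup>2)"
    using \<open>exp t \<le> 3\<close> by (intro mult_right_mono divide_right_mono) auto
  also have "\<dots> \<le> 1/2 * y\<^sup>2"
    using assms by (simp add: mult_left_le_one_le)
  finally show ?thesis using t(2) taylor2 by simp
qed

lemma bernoulli_mgf_le:
  fixes p t :: real assumes "0 \<le> p" "p \<le> 1" "\<bar>t\<bar> \<le> 1"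
  shows "p * exp t + (1 - p) \<le> exp (t * p + t\<^sup>2 * p * (1 - p))"
proof -
  define q where "q = 1 - p"
  have q: "0 \<le> q" "q \<le> 1" using assms by (auto simp: q_def)
  have e1: "exp (t*q) \<le> 1 + t*q + (t*q)\<^sup>2"
    by (rule exp_le_one_add_self_add_square) (use assms q in \<open>auto simp: abs_mult intro: mult_le_one\<close>)
  have e2: "exp (-(t*p)) \<le> 1 + (-(t*p)) + (-(t*p))\<^sup>2"
    by (rule exp_le_one_add_self_add_square) (use assms q in \<open>auto simp: abs_mult intro: mult_le_one\<close>)
  have "p * exp t + q = exp (t*p) * (p * exp (t*q) + q * exp (-(t*p)))"
    by (simp add: algebra_simps q_def flip: exp_add)
  also have "p * exp (t*q) + q * exp (-(t*p)) \<le> p * (1 + t*q + (t*q)\<^sup>2) + q * (1 + (-(t*p)) + (-(t*p))\<^sup>2)"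
    using e1 e2 assms q by (intro add_mono mult_left_mono) auto
  also have "\<dots> = 1 + t\<^sup>2 * p * q"
    by (simp add: q_def algebra_simps power2_eq_square)
  also have "\<dots> \<le> exp (t\<^sup>2 * p * q)" by (rule exp_ge_add_one_self)
  finally have "p * exp t + q \<le> exp (t*p) * exp (t\<^sup>2 * p * q)"
    by (simp add: mult_left_mono)
  thus ?thesis by (simp add: q_def exp_add)
qed

lemma binomial_pmf_tail_le:
  fixes p t u :: real assumes p: "0 < p" "p < 1" and t: "\<bar>t\<bar> \<le> 1"
  shows "measure_pmf.prob (binomial_pmf k p) {x. t * (real x - k * p) \<ge> u}
           \<le> exp (- u + k * t\<^sup>2 * p * (1 - p))"
proof -
  let ?A = "{x. t * (real x - k * p) \<ge> u}"
  let ?M = "binomial_pmf k p"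
  have "measure_pmf.prob ?M ?A = measure_pmf.prob ?M (?A \<inter> {..k})"
    using measure_Int_set_pmf[of ?M ?A] p by (simp add: set_pmf_binomial)
  also have "\<dots> = (\<Sum>x\<in>?A \<inter> {..k}. pmf ?M x)"
    by (rule measure_measure_pmf_finite) auto
  also have "\<dots> \<le> (\<Sum>x\<in>?A \<inter> {..k}. pmf ?M x * exp (t * (real x - k * p) - u))"
    by (intro sum_mono) (simp add: mult_le_cancel_left1)
  also have "\<dots> \<le> (\<Sum>x\<in>{..k}. pmf ?M x * exp (t * (real x - k * p) - u))"
    by (intro sum_mono2) auto
  also have "\<dots> = exp (- t * k * p - u) * (\<Sum>x\<le>k. real (k choose x) * (p * exp t) ^ x * (1 - p) ^ (k - x))"
    unfolding sum_distrib_left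
  proof (intro sum.cong refl)
    fix x assume "x \<in> {..k}"
    have "exp (t * (real x - k * p) - u) = exp (- t * k * p - u) * exp t ^ x"
      by (simp add: exp_of_nat_mult[symmetric] flip: exp_add) (simp add: algebra_simps)
    thus "pmf ?M x * exp (t * (real x - k * p) - u) =
        exp (- t * k * p - u) * (real (k choose x) * (p * exp t) ^ x * (1 - p) ^ (k - x))"
      using p by (simp add: power_mult_distrib)
  qed
  also have "(\<Sum>x\<le>k. real (k choose x) * (p * exp t) ^ x * (1 - p) ^ (k - x)) = (p * exp t + (1 - p)) ^ k"
    by (simp add: binomial_ring)
  also have "\<dots> \<le> exp (t * p + t\<^sup>2 * p * (1 - p)) ^ k"
    using p t by (intro power_mono bernoulli_mgf_le) auto
  also have "exp (- t * k * p - u) * \<dots> = exp (- u + k * t\<^sup>2 * p * (1 - p))"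
    by (simp add: algebra_simps flip: exp_add exp_of_nat_mult)
  finally show ?thesis by (simp add: mult_left_mono)
qed

lemma binomial_pmf_deviation_le:
  fixes p L :: real assumes p: "0 < p" "p < 1" and k: "k > 0" and L: "0 \<le> L"
    and small: "L \<le> k * p * (1 - p)"
  shows "measure_pmf.prob (binomial_pmf k p) {x. (real x - k * p)\<^sup>2 > 4 * (k * p * (1 - p)) * L}
           \<le> 2 * exp (- L)"
proof -
  define a where "a = k * p * (1 - p)"
  have "a > 0" using p k by (simp add: a_def)
  define t where "t = sqrt (L / a)"
  have t: "0 \<le> t" "t \<le> 1" using \<open>a > 0\<close> L small by (auto simp: t_def a_def)
  have "t\<^sup>2 = L / a" using \<open>a > 0\<close> L by (simp add: t_def)
  moreover have "k * t\<^sup>2 * p * (1 - p) = a * t\<^sup>2" by (simp add: a_def algebra_simps)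
  ultimately have kt2: "k * t\<^sup>2 * p * (1 - p) = L" using \<open>a > 0\<close> by simp
  have sq: "(L / a) * (4 * a * L) = (2 * L)\<^sup>2" using \<open>a > 0\<close> by (simp add: power2_eq_square)
  have t_dev: "t * sqrt (4 * a * L) = 2 * L"
    unfolding t_def real_sqrt_mult[symmetric] sq real_sqrt_abs using L by simp
  let ?M = "binomial_pmf k p"
  let ?up = "{x. t * (real x - k * p) \<ge> 2 * L}" and ?down = "{x. (-t) * (real x - k * p) \<ge> 2 * L}"
  have "{x. (real x - k * p)\<^sup>2 > 4 * a * L} \<subseteq> ?up \<union> ?down"
  proof
    fix x assume "x \<in> {x. (real x - k * p)\<^sup>2 > 4 * a * L}"
    hence "sqrt (4 * a * L) \<le> \<bar>real x - k * p\<bar>"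
      by (metis mem_Collect_eq order_less_imp_le real_sqrt_abs real_sqrt_le_mono)
    hence "2 * L \<le> t * \<bar>real x - k * p\<bar>" using t_dev t(1) by (metis mult_left_mono)
    thus "x \<in> ?up \<union> ?down" by (cases "real x - k * p \<ge> 0") (auto simp: algebra_simps)
  qed
  hence "measure_pmf.prob ?M {x. (real x - k * p)\<^sup>2 > 4 * a * L} \<le> measure_pmf.prob ?M (?up \<union> ?down)"
    by (rule measure_pmf.finite_measure_mono) simp
  also have "\<dots> \<le> measure_pmf.prob ?M ?up + measure_pmf.prob ?M ?down"
    by (rule measure_Un_le) auto
  also have "\<dots> \<le> exp (- (2 * L) + k * t\<^sup>2 * p * (1 - p)) + exp (- (2 * L) + k * (-t)\<^sup>2 * p * (1 - p))"
    using t p by (intro add_mono binomial_pmf_tail_le) auto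
  also have "\<dots> = 2 * exp (- L)" using kt2 by simp
  finally show ?thesis by (simp add: a_def)
qed

lemma prob_all_ge_union_bound:
  fixes M :: "'a pmf" and \<beta> :: real
  assumes "finite I" "\<And>i. i \<in> I \<Longrightarrow> measure_pmf.prob M {x. \<not> G i x} \<le> \<beta>"
  shows "measure_pmf.prob M {x. \<forall>i\<in>I. G i x} \<ge> 1 - card I * \<beta>"
proof -
  let ?bad = "\<Union>i\<in>I. {x. \<not> G i x}"
  have "measure_pmf.prob M ?bad \<le> (\<Sum>i\<in>I. measure_pmf.prob M {x. \<not> G i x})"
    by (rule measure_pmf.finite_measure_subadditive_finite) (use assms in auto)
  also have "\<dots> \<le> card I * \<beta>" using sum_mono[OF assms(2)] by simp
  moreover have "{x. \<forall>i\<in>I. G i x} = UNIV - ?bad" by auto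
  ultimately show ?thesis using measure_pmf.prob_compl[of ?bad M] by simp
qed

definition win_prob :: "(nat \<Rightarrow> real) \<Rightarrow> nat \<times> nat \<Rightarrow> real" where
  "win_prob w e = w (fst e) / (w (fst e) + w (snd e))"

lemma prob_comparisons_edge:
  assumes "finite E" "e \<in> E"
  shows "measure_pmf.prob (comparisons E w k) {X. Q (X e)} = measure_pmf.prob (binomial_pmf k (win_prob w e)) {x. Q x}"
proof -
  have "map_pmf (\<lambda>X. X e) (comparisons E w k) = binomial_pmf k (win_prob w e)"
    unfolding comparisons_def win_prob_def using assms by (simp add: Pi_pmf_component)
  thus ?thesis by (metis measure_map_pmf vimage_Collect_eq)
qed

lemma prob_all_edges_concentrated:
  fixes L :: real
  assumes E: "finite E" and w: "\<And>e. e \<in> E \<Longrightarrow> w (fst e) > 0 \<and> w (snd e) > 0"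
    and k: "k > 0" and L: "0 \<le> L"
    and enough: "\<And>e. e \<in> E \<Longrightarrow> L \<le> k * win_prob w e * (1 - win_prob w e)"
  shows "measure_pmf.prob (comparisons E w k)
           {X. \<forall>e\<in>E. (real (X e) - k * win_prob w e)\<^sup>2 \<le> 4 * (k * win_prob w e * (1 - win_prob w e)) * L}
         \<ge> 1 - card E * (2 * exp (- L))"
proof (rule prob_all_ge_union_bound[OF E])
  fix e assume e: "e \<in> E"
  let ?p = "win_prob w e"
  have p: "0 < ?p" "?p < 1" using w[OF e] by (simp_all add: win_prob_def field_simps)
  have "measure_pmf.prob (comparisons E w k) {X. \<not> (real (X e) - k * ?p)\<^sup>2 \<le> 4 * (k * ?p * (1 - ?p)) * L}
      = measure_pmf.prob (binomial_pmf k ?p) {x. (real x - k * ?p)\<^sup>2 > 4 * (k * ?p * (1 - ?p)) * L}"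
    using prob_comparisons_edge[OF E e, of w k] by (simp add: not_le)
  also have "\<dots> \<le> 2 * exp (- L)"
    using enough[OF e] by (intro binomial_pmf_deviation_le p k L)
  finally show "measure_pmf.prob (comparisons E w k)
      {X. \<not> (real (X e) - k * ?p)\<^sup>2 \<le> 4 * (k * ?p * (1 - ?p)) * L} \<le> 2 * exp (- L)" .
qed

section \<open>The logit remainder\<close>

definition logit_remainder :: "real \<Rightarrow> real \<Rightarrow> real" where
  "logit_remainder p y = ln y - ln (1 - y) - ln (p / (1 - p)) - (y - p) / (p * (1 - p))"

lemma logit_remainder_deriv:
  assumes "0 < y" "y < 1" "0 < p" "p < 1"
  shows "(logit_remainder p has_real_derivative 1 / y + 1 / (1 - y) - 1 / (p * (1 - p))) (at y)"
  unfolding logit_remainder_def using assms by (auto intro!: derivative_eq_intros)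

lemma logit_remainder_deriv_bound:
  fixes p z :: real
  assumes p: "0 < p" "p < 1" and z: "p / 2 \<le> z" "(1 - p) / 2 \<le> 1 - z"
  shows "\<bar>1 / z + 1 / (1 - z) - 1 / (p * (1 - p))\<bar> \<le> 4 * \<bar>z - p\<bar> / (p\<^sup>2 * (1 - p)\<^sup>2)"
proof -
  define q where "q = 1 - p"
  have q: "0 < q" "q < 1" using p by (auto simp: q_def)
  have z01: "0 < z" "z < 1" using z p by auto
  have num: "\<bar>(p - z) * (q - z)\<bar> \<le> \<bar>z - p\<bar>"
  proof -
    have "\<bar>q - z\<bar> \<le> 1" using z01 q by linarith
    thus ?thesis using mult_left_mono[of "\<bar>q - z\<bar>" 1 "\<bar>p - z\<bar>"] by (simp add: abs_mult abs_minus_commute[of p z])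
  qed
  have den: "p * q / 4 \<le> z * (1 - z)"
    using mult_mono[of "p / 2" z "q / 2" "1 - z"] z p q by (simp add: q_def)
  have "1 / z + 1 / (1 - z) - 1 / (p * q) = (p - z) * (q - z) / (z * (1 - z) * (p * q))"
    using z01 p q by (simp add: field_simps q_def)
  hence "\<bar>1 / z + 1 / (1 - z) - 1 / (p * q)\<bar> = \<bar>(p - z) * (q - z)\<bar> / (z * (1 - z) * (p * q))"
    using z01 p q by (simp add: abs_div)
  also have "\<dots> \<le> \<bar>z - p\<bar> / (p * q / 4 * (p * q))"
    using num den p q by (intro frac_le mult_right_mono) auto
  also have "\<dots> = 4 * \<bar>z - p\<bar> / (p\<^sup>2 * q\<^sup>2)" by (simp add: power2_eq_square mult_ac)
  finally show ?thesis by (simp add: q_def)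
qed

lemma logit_remainder_bound:
  assumes p: "0 < p" "p < 1" and x: "\<bar>x - p\<bar> \<le> p * (1 - p) / 2"
  shows "\<bar>logit_remainder p x\<bar> \<le> 4 * (x - p)\<^sup>2 / (p\<^sup>2 * (1 - p)\<^sup>2)"
proof -
  define d where "d = \<bar>x - p\<bar>"
  have "p * (1 - p) \<le> p" by (rule mult_left_le) (use p in auto)
  hence d1: "d \<le> p / 2" using x unfolding d_def by linarith
  have "p * (1 - p) \<le> 1 - p" by (rule mult_left_le_one_le) (use p in auto)
  hence d2: "d \<le> (1 - p) / 2" using x unfolding d_def by argo
  have in_range: "p / 2 \<le> z \<and> (1 - p) / 2 \<le> 1 - z \<and> 0 < z \<and> z < 1" if "z \<in> {p - d..p + d}" for z
    using that d1 d2 p by auto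
  have "\<bar>logit_remainder p x - logit_remainder p p\<bar> \<le> 4 * d / (p\<^sup>2 * (1 - p)\<^sup>2) * \<bar>x - p\<bar>"
  proof (rule field_differentiable_bound[where S = "{p - d..p + d}", simplified real_norm_def])
    fix z assume "z \<in> {p - d..p + d}"
    thus "(logit_remainder p has_field_derivative 1 / z + 1 / (1 - z) - 1 / (p * (1 - p))) (at z within {p - d..p + d})"
      using in_range p by (auto intro!: has_field_derivative_at_within[OF logit_remainder_deriv])
    have "4 * \<bar>z - p\<bar> / (p\<^sup>2 * (1 - p)\<^sup>2) \<le> 4 * d / (p\<^sup>2 * (1 - p)\<^sup>2)"
      using \<open>z \<in> _\<close> by (intro divide_right_mono) auto
    with logit_remainder_deriv_bound[of p z] in_range[OF \<open>z \<in> _\<close>] p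
    show "\<bar>1 / z + 1 / (1 - z) - 1 / (p * (1 - p))\<bar> \<le> 4 * d / (p\<^sup>2 * (1 - p)\<^sup>2)"
      by linarith
  qed (auto simp: d_def)
  moreover have "logit_remainder p p = 0" using p by (simp add: logit_remainder_def ln_div)
  ultimately have "\<bar>logit_remainder p x\<bar> \<le> 4 * d / (p\<^sup>2 * (1 - p)\<^sup>2) * d" by (simp add: d_def)
  also have "\<dots> = 4 * d\<^sup>2 / (p\<^sup>2 * (1 - p)\<^sup>2)" by (simp add: power2_eq_square)
  finally show ?thesis by (simp add: d_def)
qed

lemma win_prob_odds:
  assumes "w (fst e) > 0" "w (snd e) > 0"
  shows "w (fst e) / w (snd e) = win_prob w e / (1 - win_prob w e)"
    and "w (fst e) / w (snd e) + 2 + 1 / (w (fst e) / w (snd e)) = 1 / (win_prob w e * (1 - win_prob w e))"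
proof -
  have q: "1 - win_prob w e = w (snd e) / (w (fst e) + w (snd e))"
    using assms by (simp add: win_prob_def field_simps)
  show "w (fst e) / w (snd e) = win_prob w e / (1 - win_prob w e)"
    unfolding q using assms by (simp add: win_prob_def)
  show "w (fst e) / w (snd e) + 2 + 1 / (w (fst e) / w (snd e)) = 1 / (win_prob w e * (1 - win_prob w e))"
    unfolding q using assms by (simp add: win_prob_def field_simps power2_eq_square)
qed

lemma win_prob_variance_ge:
  assumes pos: "w (fst e) > 0" "w (snd e) > 0"
    and ratio: "w (fst e) / w (snd e) \<le> b" "w (snd e) / w (fst e) \<le> b"
  shows "1 / (4 * b) \<le> win_prob w e * (1 - win_prob w e)"
proof -
  define a c where "a = w (fst e)" and "c = w (snd e)"
  have a: "a > 0" and c: "c > 0" using pos by (simp_all add: a_def c_def)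
  have ab: "a \<le> b * c" and cb: "c \<le> b * a" using ratio a c by (simp_all add: a_def c_def pos_divide_le_eq)
  have "b > 0" using ab a c by (smt (verit) mult_nonpos_nonneg)
  have "(a + c)\<^sup>2 \<le> 4 * b * (a * c)"
  proof (cases "c \<le> a")
    case True
    have "(a + c)\<^sup>2 \<le> (2 * a)\<^sup>2" using True c by (intro power_mono) auto
    also have "\<dots> \<le> 4 * (a * (b * c))" using ab a by (simp add: power2_eq_square)
    finally show ?thesis by (simp add: mult_ac)
  next
    case False
    have "(a + c)\<^sup>2 \<le> (2 * c)\<^sup>2" using False a by (intro power_mono) auto
    also have "\<dots> \<le> 4 * (c * (b * a))" using cb c by (simp add: power2_eq_square)
    finally show ?thesis by (simp add: mult_ac)
  qed
  hence "1 / (4 * b) \<le> a * c / (a + c)\<^sup>2" using a c \<open>b > 0\<close> by (simp add: field_simps)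
  also have "\<dots> = win_prob w e * (1 - win_prob w e)"
    using a c by (simp add: win_prob_def a_def c_def field_simps power2_eq_square)
  finally show ?thesis .
qed

lemma Delta_eq_logit_remainder:
  assumes w: "w (fst e) > 0" "w (snd e) > 0" and F: "0 < real (X e) / k" "real (X e) / k < 1"
  shows "Delta w k X e = logit_remainder (win_prob w e) (real (X e) / k)"
proof -
  define F p \<rho> where "F = real (X e) / k" and "p = win_prob w e" and "\<rho> = w (fst e) / w (snd e)"
  have "Delta w k X e = ln (F / (1 - F)) - ln \<rho> - (\<rho> + 2 + 1 / \<rho>) * (F - p)"
    by (simp add: Delta_def Let_def F_def p_def \<rho>_def win_prob_def)
  also have "\<dots> = ln (F / (1 - F)) - ln (p / (1 - p)) - (1 / (p * (1 - p))) * (F - p)"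
    unfolding \<rho>_def p_def by (subst win_prob_odds(2)[OF w], subst win_prob_odds(1)[OF w]) (rule refl)
  also have "\<dots> = logit_remainder p F"
    using F by (simp add: logit_remainder_def ln_div F_def[symmetric])
  finally show ?thesis by (simp add: F_def p_def)
qed

lemma abs_Delta_le:
  fixes w :: "nat \<Rightarrow> real" and e :: "nat \<times> nat" and L :: real
  defines "p \<equiv> win_prob w e"
  assumes w: "w (fst e) > 0" "w (snd e) > 0" and k: "k > 0"
    and enough: "16 * L \<le> k * p * (1 - p)"
    and concentrated: "(real (X e) - k * p)\<^sup>2 \<le> 4 * (k * p * (1 - p)) * L"
  shows "\<bar>Delta w k X e\<bar> \<le> 16 * L / (k * (p * (1 - p)))"
proof -
  define F where "F = real (X e) / k"
  define s where "s = p * (1 - p)"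
  have p: "0 < p" "p < 1" using w by (simp_all add: p_def win_prob_def field_simps)
  have s: "0 < s" "s < p" "s < 1 - p"
    using p by (simp_all add: s_def mult_left_le mult_left_le_one_le)
  have "(F - p)\<^sup>2 = (real (X e) - k * p)\<^sup>2 / k\<^sup>2"
    using k by (simp add: F_def field_simps power2_eq_square)
  also have "\<dots> \<le> 4 * (k * s) * L / k\<^sup>2"
    using concentrated by (simp add: s_def mult.assoc divide_right_mono)
  also have "\<dots> = 4 * s * L / k"
    using k by (simp add: power2_eq_square)
  finally have Fp: "(F - p)\<^sup>2 \<le> 4 * s * L / k" .
  also have "\<dots> = s * (16 * L) / (4 * k)"
    by simp
  also have "\<dots> \<le> s * (k * s) / (4 * k)"
    using enough s by (intro divide_right_mono mult_left_mono) (auto simp: s_def mult_ac)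
  also have "\<dots> = (s / 2)\<^sup>2"
    using k by (simp add: power2_eq_square)
  finally have close: "\<bar>F - p\<bar> \<le> s / 2"
    using s by (simp add: power2_le_iff_abs_le)
  hence "0 < F" "F < 1" using abs_le_D1[OF close] abs_le_D2[OF close] s by linarith+
  hence "\<bar>Delta w k X e\<bar> = \<bar>logit_remainder p F\<bar>"
    using Delta_eq_logit_remainder[OF w] by (simp add: F_def p_def)
  also have "\<dots> \<le> 4 * (F - p)\<^sup>2 / (p\<^sup>2 * (1 - p)\<^sup>2)"
    using logit_remainder_bound[OF p] close by (simp add: s_def)
  also have "\<dots> = 4 * (F - p)\<^sup>2 / s\<^sup>2"
    by (simp add: s_def power_mult_distrib)
  also have "\<dots> \<le> 4 * (4 * s * L / k) / s\<^sup>2"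
    using Fp by (intro divide_right_mono mult_left_mono) auto
  also have "\<dots> = 16 * L / (k * s)"
    using s k by (simp add: field_simps power2_eq_square)
  finally show ?thesis by (simp add: s_def)
qed

section \<open>Matrices indexed by the vertices\<close>

lemma finite_verts [simp]: "finite (verts n)"
  by (simp add: verts_def)

lemma card_verts [simp]: "card (verts n) = n"
  by (simp add: verts_def)

lemma sum_verts_conv_lessThan: "(\<Sum>u\<in>verts n. f u) = (\<Sum>a<n. f (Suc a))"
  unfolding verts_def using sum.atLeast1_atMost_eq[of f n] by simp

lemma mmul_assoc: "mmul n (mmul n A B) C = mmul n A (mmul n B C)"
  unfolding mmul_def sum_distrib_left sum_distrib_right
  by (intro ext, subst sum.swap) (simp add: mult_ac)

lemma mtrans_mmul: "mtrans (mmul n A B) = mmul n (mtrans B) (mtrans A)"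
  by (intro ext) (simp add: mtrans_def mmul_def mult.commute)

lemma mtrans_mtrans [simp]: "mtrans (mtrans A) = A"
  by (simp add: mtrans_def fun_eq_iff)

definition mat_eq_on :: "nat \<Rightarrow> (nat \<Rightarrow> nat \<Rightarrow> real) \<Rightarrow> (nat \<Rightarrow> nat \<Rightarrow> real) \<Rightarrow> bool" where
  "mat_eq_on n A B \<longleftrightarrow> (\<forall>i\<in>verts n. \<forall>j\<in>verts n. A i j = B i j)"

lemma mat_eq_on_refl [simp]: "mat_eq_on n A A"
  by (simp add: mat_eq_on_def)

lemma mat_eq_on_sym: "mat_eq_on n A B \<Longrightarrow> mat_eq_on n B A"
  by (simp add: mat_eq_on_def)

lemma mat_eq_on_trans [trans]: "mat_eq_on n A B \<Longrightarrow> mat_eq_on n B C \<Longrightarrow> mat_eq_on n A C"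
  by (simp add: mat_eq_on_def)

lemma mmul_cong_on:
  "mat_eq_on n A A' \<Longrightarrow> mat_eq_on n B B' \<Longrightarrow> mat_eq_on n (mmul n A B) (mmul n A' B')"
  by (simp add: mat_eq_on_def mmul_def)

lemma mtrans_cong_on: "mat_eq_on n A B \<Longrightarrow> mat_eq_on n (mtrans A) (mtrans B)"
  by (simp add: mat_eq_on_def mtrans_def)

lemma is_pinv_iff:
  "is_pinv n A X \<longleftrightarrow> (\<forall>i j. i \<notin> verts n \<or> j \<notin> verts n \<longrightarrow> X i j = 0) \<and>
     mat_eq_on n (mmul n (mmul n A X) A) A \<and> mat_eq_on n (mmul n (mmul n X A) X) X \<and>
     mat_eq_on n (mtrans (mmul n A X)) (mmul n A X) \<and> mat_eq_on n (mtrans (mmul n X A)) (mmul n X A)"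
  unfolding is_pinv_def mat_eq_on_def by blast

lemma pinv_absorb_right:
  assumes XAX: "mat_eq_on n (mmul n (mmul n X A) X) X"
    and AX: "mat_eq_on n (mtrans (mmul n A X)) (mmul n A X)"
    and AYA: "mat_eq_on n (mmul n (mmul n A Y) A) A"
    and AY: "mat_eq_on n (mtrans (mmul n A Y)) (mmul n A Y)"
  shows "mat_eq_on n X (mmul n X (mmul n A Y))"
proof -
  define P where "P = mmul n X (mmul n (mtrans X) (mtrans A))"
  have X_eq_P: "mat_eq_on n X P"
  proof -
    have "mat_eq_on n X (mmul n X (mmul n A X))"
      using XAX by (simp add: mmul_assoc mat_eq_on_sym)
    also have "mat_eq_on n \<dots> P"
      unfolding P_def mtrans_mmul[symmetric] by (intro mmul_cong_on mat_eq_on_refl mat_eq_on_sym[OF AX])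
    finally show ?thesis .
  qed
  have "mat_eq_on n (mtrans A) (mtrans (mmul n (mmul n A Y) A))"
    by (rule mtrans_cong_on[OF mat_eq_on_sym[OF AYA]])
  also have "mat_eq_on n \<dots> (mmul n (mtrans A) (mmul n A Y))"
    unfolding mtrans_mmul[of n "mmul n A Y" A] by (intro mmul_cong_on mat_eq_on_refl AY)
  finally have "mat_eq_on n (mmul n X (mmul n (mtrans X) (mtrans A)))
      (mmul n X (mmul n (mtrans X) (mmul n (mtrans A) (mmul n A Y))))"
    by (intro mmul_cong_on mat_eq_on_refl)
  hence "mat_eq_on n P (mmul n P (mmul n A Y))"
    by (simp add: P_def mmul_assoc)
  also have "mat_eq_on n \<dots> (mmul n X (mmul n A Y))"
    using X_eq_P by (simp add: mmul_cong_on mat_eq_on_sym)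
  finally show ?thesis by (rule mat_eq_on_trans[OF X_eq_P])
qed

text \<open>Applied to \<open>X, Y\<close> and to the transposes \<open>Y\<^sup>T, X\<^sup>T\<close> (pseudoinverses of \<open>A\<^sup>T\<close>),
  the absorption law gives \<open>X = XAY = Y\<close>.\<close>

lemma is_pinv_unique:
  assumes X: "is_pinv n A X" and Y: "is_pinv n A Y"
  shows "X = Y"
proof -
  note X' = X[unfolded is_pinv_iff] and Y' = Y[unfolded is_pinv_iff]
  have "mat_eq_on n X (mmul n X (mmul n A Y))"
    using X' Y' by (intro pinv_absorb_right) auto
  moreover have "mat_eq_on n (mtrans Y) (mmul n (mtrans Y) (mmul n (mtrans A) (mtrans X)))"
  proof (rule pinv_absorb_right)
    show "mat_eq_on n (mmul n (mmul n (mtrans Y) (mtrans A)) (mtrans Y)) (mtrans Y)"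
      using Y' by (simp add: mtrans_cong_on mmul_assoc flip: mtrans_mmul)
    show "mat_eq_on n (mtrans (mmul n (mtrans A) (mtrans Y))) (mmul n (mtrans A) (mtrans Y))"
      using Y' by (simp add: mat_eq_on_sym flip: mtrans_mmul)
    show "mat_eq_on n (mmul n (mmul n (mtrans A) (mtrans X)) (mtrans A)) (mtrans A)"
      using X' by (simp add: mtrans_cong_on mmul_assoc flip: mtrans_mmul)
    show "mat_eq_on n (mtrans (mmul n (mtrans A) (mtrans X))) (mmul n (mtrans A) (mtrans X))"
      using X' by (simp add: mat_eq_on_sym flip: mtrans_mmul)
  qed
  hence "mat_eq_on n Y (mmul n (mmul n X A) Y)"
    using mtrans_cong_on by (fastforce simp: mtrans_mmul mmul_assoc)
  ultimately have "mat_eq_on n X Y"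
    by (metis mmul_assoc mat_eq_on_sym mat_eq_on_trans)
  show ?thesis
  proof (intro ext)
    fix i j
    show "X i j = Y i j"
      using \<open>mat_eq_on n X Y\<close> X' Y' by (cases "i \<in> verts n \<and> j \<in> verts n") (auto simp: mat_eq_on_def)
  qed
qed

definition mat_id :: "nat \<Rightarrow> nat \<Rightarrow> real" where
  "mat_id i j = (if i = j then 1 else 0)"

lemma mmul_mat_id_left: "i \<in> verts n \<Longrightarrow> mmul n mat_id A i j = A i j"
proof -
  have row: "(\<lambda>k. mat_id i k * A k j) = (\<lambda>k. if i = k then A k j else 0)" by (auto simp: mat_id_def)
  show "i \<in> verts n \<Longrightarrow> ?thesis" unfolding mmul_def row by simp
qed

lemma mmul_mat_id_right: "j \<in> verts n \<Longrightarrow> mmul n A mat_id i j = A i j"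
proof -
  have col: "(\<lambda>k. A i k * mat_id k j) = (\<lambda>k. if k = j then A i k else 0)" by (auto simp: mat_id_def)
  show "j \<in> verts n \<Longrightarrow> ?thesis" unfolding mmul_def col by simp
qed

text \<open>Shifting indices by one turns \<open>M\<close> into a \<open>Jordan_Normal_Form\<close> matrix with trivial kernel,
  hence with nonzero determinant, hence a unit of the matrix ring.\<close>

lemma mmul_inverse_exists:
  fixes M :: "nat \<Rightarrow> nat \<Rightarrow> real"
  assumes inj: "\<And>x. \<forall>u\<in>verts n. (\<Sum>v\<in>verts n. M u v * x v) = 0 \<Longrightarrow> \<forall>u\<in>verts n. x u = 0"
  shows "\<exists>Y. mat_eq_on n (mmul n M Y) mat_id \<and> mat_eq_on n (mmul n Y M) mat_id"
proof -
  define A where "A = mat n n (\<lambda>(a, b). M (Suc a) (Suc b))"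
  have A: "A \<in> carrier_mat n n" by (simp add: A_def)
  have "det A \<noteq> 0"
  proof
    assume "det A = 0"
    then obtain v where v: "v \<in> carrier_vec n" "v \<noteq> 0\<^sub>v n" "A *\<^sub>v v = 0\<^sub>v n"
      using det_0_iff_vec_prod_zero_field[OF A] by blast
    define x where "x u = (if 1 \<le> u \<and> u \<le> n then v $ (u - 1) else 0)" for u
    have "\<forall>u\<in>verts n. (\<Sum>w\<in>verts n. M u w * x w) = 0"
    proof
      fix u assume "u \<in> verts n"
      hence u: "u - 1 < n" "Suc (u - 1) = u" by (auto simp: verts_def)
      have "(\<Sum>w\<in>verts n. M u w * x w) = (A *\<^sub>v v) $ (u - 1)"
        using u v(1) A
        by (simp add: sum_verts_conv_lessThan x_def A_def mult_mat_vec_def scalar_prod_def row_def lessThan_atLeast0)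
      thus "(\<Sum>w\<in>verts n. M u w * x w) = 0" using v(3) u by simp
    qed
    hence x0: "\<forall>u\<in>verts n. x u = 0" by (rule inj)
    have "v = 0\<^sub>v n"
    proof (rule eq_vecI)
      fix b assume "b < dim_vec (0\<^sub>v n :: real vec)"
      hence "b < n" "Suc b \<in> verts n" by (simp_all add: verts_def)
      thus "v $ b = 0\<^sub>v n $ b" using x0 by (auto simp: x_def)
    qed (use v in simp)
    thus False using v(2) by simp
  qed
  then obtain B where B: "B \<in> carrier_mat n n" "B * A = 1\<^sub>m n" "A * B = 1\<^sub>m n"
    using det_non_zero_imp_unit[OF A] unfolding Units_def ring_mat_def by auto
  define Y where "Y i j = B $$ (i - 1, j - 1)" for i j
  have idx: "i \<in> verts n \<Longrightarrow> i - 1 < n \<and> Suc (i - 1) = i" for i by (auto simp: verts_def)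
  have "mmul n M Y i j = (A * B) $$ (i - 1, j - 1)" "mmul n Y M i j = (B * A) $$ (i - 1, j - 1)"
    if "i \<in> verts n" "j \<in> verts n" for i j
    using idx[OF that(1)] idx[OF that(2)] A B(1)
    by (simp_all add: mmul_def sum_verts_conv_lessThan A_def Y_def scalar_prod_def row_def col_def lessThan_atLeast0)
  hence "mat_eq_on n (mmul n M Y) mat_id \<and> mat_eq_on n (mmul n Y M) mat_id"
    using B(2,3) idx by (auto simp: mat_eq_on_def mat_id_def verts_def)
  thus ?thesis by blast
qed

definition centering :: "nat \<Rightarrow> nat \<Rightarrow> nat \<Rightarrow> real" where
  "centering n i j = mat_id i j - 1 / n"

lemma mmul_centering_left:
  "i \<in> verts n \<Longrightarrow> mmul n (centering n) A i j = A i j - (\<Sum>k\<in>verts n. A k j) / n"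
  using mmul_mat_id_left[of i n A j]
  by (simp add: mmul_def centering_def left_diff_distrib sum_subtractf sum_divide_distrib)

lemma sum_ediff_mult:
  assumes "i \<in> verts n" "j \<in> verts n"
  shows "(\<Sum>s\<in>verts n. ediff i j s * g s) = g i - g j"
proof -
  have "ediff i j s * g s = (if s = i then g s else 0) - (if s = j then g s else 0)" for s
    by (auto simp: ediff_def)
  thus ?thesis using assms by (simp add: sum_subtractf)
qed

lemma sorted_descending_distinct:
  "sorted_wrt (\<lambda>a b. \<psi> b < (\<psi> :: nat \<Rightarrow> real) a) ps \<Longrightarrow> distinct ps"
  by (induction ps) auto

section \<open>Laplacian, pseudoinverse and electrical potentials\<close>

locale connected_oriented_graph =
  fixes n :: nat and E :: "(nat \<times> nat) set"
  assumes oriented: "oriented_simple_graph n E"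
    and connected: "graph_connected n E"
    and n_pos: "n \<ge> 1"
begin

abbreviation V where "V \<equiv> verts n"
abbreviation Lap where "Lap \<equiv> laplacian E"

lemma edges_subset: "E \<subseteq> V \<times> V"
  using oriented by (simp add: oriented_simple_graph_def)

lemma finite_edges [simp]: "finite E"
  using edges_subset by (rule finite_subset) simp

lemma edge_endpoints: "e \<in> E \<Longrightarrow> fst e \<in> V \<and> snd e \<in> V \<and> fst e \<noteq> snd e"
  using oriented by (auto simp: oriented_simple_graph_def)

lemma adj_in_verts: "adj E x z \<Longrightarrow> x \<in> V \<and> z \<in> V"
  using edges_subset by (auto simp: adj_def)

lemma adj_sym: "adj E x z \<Longrightarrow> adj E z x"
  by (auto simp: adj_def)

definition grad :: "(nat \<Rightarrow> real) \<Rightarrow> nat \<times> nat \<Rightarrow> real" where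
  "grad x e = x (fst e) - x (snd e)"

lemma incidence_mult_grad:
  "e \<in> E \<Longrightarrow> incidence E u e * grad x e =
     (if u = fst e then x u - x (snd e) else if u = snd e then x u - x (fst e) else 0)"
  using edge_endpoints[of e] by (auto simp: incidence_def grad_def)

lemma sum_incidence_mult: "e \<in> E \<Longrightarrow> (\<Sum>u\<in>V. incidence E u e * x u) = grad x e"
proof -
  assume e: "e \<in> E"
  have "incidence E u e * x u = (if u = fst e then x u else 0) - (if u = snd e then x u else 0)" for u
    using edge_endpoints[OF e] e by (auto simp: incidence_def)
  thus ?thesis using edge_endpoints[OF e] by (simp add: sum_subtractf grad_def)
qed

lemma laplacian_mult: "(\<Sum>v\<in>V. Lap u v * x v) = (\<Sum>e\<in>E. incidence E u e * grad x e)"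
proof -
  have "(\<Sum>v\<in>V. Lap u v * x v) = (\<Sum>e\<in>E. incidence E u e * (\<Sum>v\<in>V. incidence E v e * x v))"
    unfolding laplacian_def sum_distrib_right sum_distrib_left
    by (subst sum.swap) (simp add: mult_ac)
  thus ?thesis by (simp add: sum_incidence_mult)
qed

lemma laplacian_sym: "Lap u v = Lap v u"
  by (simp add: laplacian_def mult.commute)

lemma laplacian_row_sum: "(\<Sum>v\<in>V. Lap u v) = 0"
  using laplacian_mult[of u "\<lambda>_. 1"] by (simp add: grad_def)

lemma laplacian_col_sum: "(\<Sum>u\<in>V. Lap u v) = 0"
  using laplacian_row_sum[of v] by (simp add: laplacian_sym)

lemma laplacian_quadratic_form:
  "(\<Sum>u\<in>V. x u * (\<Sum>v\<in>V. Lap u v * x v)) = (\<Sum>e\<in>E. (grad x e)\<^sup>2)"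
proof -
  have "(\<Sum>u\<in>V. x u * (\<Sum>v\<in>V. Lap u v * x v)) = (\<Sum>e\<in>E. grad x e * (\<Sum>u\<in>V. incidence E u e * x u))"
    unfolding laplacian_mult sum_distrib_left by (subst sum.swap) (simp add: mult_ac)
  thus ?thesis by (simp add: sum_incidence_mult power2_eq_square)
qed

lemma eq_if_grad_zero:
  assumes "\<And>e. e \<in> E \<Longrightarrow> grad x e = 0" "u \<in> V" "v \<in> V"
  shows "x u = x v"
proof -
  have "(u, v) \<in> {(a, b). adj E a b}\<^sup>*" using connected assms(2,3) by (simp add: graph_connected_def)
  thus ?thesis
  proof (induction rule: rtrancl_induct)
    case (step y z)
    hence "x y = x z" using assms(1)[of "(y, z)"] assms(1)[of "(z, y)"] by (auto simp: adj_def grad_def)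
    thus ?case using step.IH by simp
  qed simp
qed

definition shifted_laplacian :: "nat \<Rightarrow> nat \<Rightarrow> real" where
  "shifted_laplacian u v = Lap u v + 1 / n"

lemma shifted_laplacian_sym: "shifted_laplacian u v = shifted_laplacian v u"
  by (simp add: shifted_laplacian_def laplacian_sym)

lemma shifted_laplacian_col_sum: "(\<Sum>u\<in>V. shifted_laplacian u v) = 1"
  using n_pos by (simp add: shifted_laplacian_def sum.distrib laplacian_col_sum)

text \<open>A vector killed by \<open>L + J/n\<close> sums to zero, since the columns sum to one; it then lies in
  the kernel of \<open>L\<close>, which consists of the constants because the graph is connected.\<close>

lemma shifted_laplacian_injective:
  assumes "\<forall>u\<in>V. (\<Sum>v\<in>V. shifted_laplacian u v * x v) = 0" shows "\<forall>u\<in>V. x u = 0"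
proof -
  have Mx: "(\<Sum>v\<in>V. shifted_laplacian u v * x v) = (\<Sum>v\<in>V. Lap u v * x v) + (\<Sum>v\<in>V. x v) / n" for u
    by (simp add: shifted_laplacian_def algebra_simps sum.distrib sum_divide_distrib)
  have "(\<Sum>v\<in>V. x v) = (\<Sum>v\<in>V. x v * (\<Sum>u\<in>V. shifted_laplacian u v))"
    by (simp add: shifted_laplacian_col_sum)
  also have "\<dots> = (\<Sum>u\<in>V. \<Sum>v\<in>V. shifted_laplacian u v * x v)"
    by (subst sum.swap) (simp add: sum_distrib_left mult_ac)
  also have "\<dots> = 0" using assms by simp
  finally have sum0: "(\<Sum>v\<in>V. x v) = 0" .
  hence "(\<Sum>v\<in>V. Lap u v * x v) = 0" if "u \<in> V" for u using assms that Mx[of u] by simp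
  hence "(\<Sum>e\<in>E. (grad x e)\<^sup>2) = 0" using laplacian_quadratic_form[of x] by simp
  hence "grad x e = 0" if "e \<in> E" for e using that by (simp add: sum_nonneg_eq_0_iff)
  hence const: "x v = x 1" if "v \<in> V" for v
    using eq_if_grad_zero that n_pos by (simp add: verts_def)
  hence "real n * x 1 = 0" using sum0 by simp
  thus ?thesis using const n_pos by simp
qed

definition shifted_inverse :: "nat \<Rightarrow> nat \<Rightarrow> real" where
  "shifted_inverse = (SOME Y. mat_eq_on n (mmul n shifted_laplacian Y) mat_id \<and>
                              mat_eq_on n (mmul n Y shifted_laplacian) mat_id)"

lemma shifted_inverse:
  "mat_eq_on n (mmul n shifted_laplacian shifted_inverse) mat_id"
  "mat_eq_on n (mmul n shifted_inverse shifted_laplacian) mat_id"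
  using someI_ex[OF mmul_inverse_exists[OF shifted_laplacian_injective]]
  unfolding shifted_inverse_def by blast+

lemma shifted_inverse_col_sum: "j \<in> V \<Longrightarrow> (\<Sum>k\<in>V. shifted_inverse k j) = 1"
proof -
  assume j: "j \<in> V"
  have "(\<Sum>k\<in>V. shifted_inverse k j) = (\<Sum>k\<in>V. shifted_inverse k j * (\<Sum>i\<in>V. shifted_laplacian i k))"
    by (simp add: shifted_laplacian_col_sum)
  also have "\<dots> = (\<Sum>i\<in>V. mmul n shifted_laplacian shifted_inverse i j)"
    unfolding mmul_def by (subst sum.swap) (simp add: sum_distrib_left mult_ac)
  also have "\<dots> = (\<Sum>i\<in>V. mat_id i j)"
    using shifted_inverse(1) j by (intro sum.cong) (auto simp: mat_eq_on_def)
  finally show ?thesis using j by (simp add: mat_id_def)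
qed

lemma shifted_inverse_sym: "i \<in> V \<Longrightarrow> j \<in> V \<Longrightarrow> shifted_inverse i j = shifted_inverse j i"
proof -
  let ?M = shifted_laplacian and ?Y = shifted_inverse
  have MYt: "mat_eq_on n (mmul n ?M (mtrans ?Y)) mat_id"
  proof -
    have "mtrans ?M = ?M" by (simp add: fun_eq_iff mtrans_def shifted_laplacian_sym)
    hence "mmul n ?M (mtrans ?Y) = mtrans (mmul n ?Y ?M)" by (simp add: mtrans_mmul)
    thus ?thesis using shifted_inverse(2) by (auto simp: mat_eq_on_def mtrans_def mat_id_def)
  qed
  have "mat_eq_on n ?Y (mmul n ?Y mat_id)"
    by (simp add: mat_eq_on_def mmul_mat_id_right)
  also have "mat_eq_on n \<dots> (mmul n ?Y (mmul n ?M (mtrans ?Y)))"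
    by (intro mmul_cong_on mat_eq_on_refl mat_eq_on_sym[OF MYt])
  also have "mat_eq_on n \<dots> (mmul n mat_id (mtrans ?Y))"
    unfolding mmul_assoc[symmetric] using shifted_inverse(2) by (intro mmul_cong_on mat_eq_on_refl)
  also have "mat_eq_on n \<dots> (mtrans ?Y)"
    by (simp add: mat_eq_on_def mmul_mat_id_left)
  finally show "i \<in> V \<Longrightarrow> j \<in> V \<Longrightarrow> ?Y i j = ?Y j i"
    by (simp add: mat_eq_on_def mtrans_def)
qed

text \<open>The pseudoinverse of the Laplacian is \<open>(L + J/n)\<^sup>-\<^sup>1 - J/n\<close>.\<close>

definition green :: "nat \<Rightarrow> nat \<Rightarrow> real" where
  "green i j = (if i \<in> V \<and> j \<in> V then shifted_inverse i j - 1 / n else 0)"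

lemma green_sym: "green i j = green j i"
  by (auto simp: green_def shifted_inverse_sym)

lemma green_col_sum: "j \<in> V \<Longrightarrow> (\<Sum>k\<in>V. green k j) = 0"
  using shifted_inverse_col_sum[of j] n_pos by (simp add: green_def sum_subtractf)

lemma laplacian_green: "mat_eq_on n (mmul n Lap green) (centering n)"
  unfolding mat_eq_on_def
proof (intro ballI)
  fix i j assume i: "i \<in> V" and j: "j \<in> V"
  have "mmul n Lap green i j = (\<Sum>k\<in>V. Lap i k * shifted_inverse k j) - (\<Sum>k\<in>V. Lap i k) / n"
    unfolding mmul_def green_def using j by (simp add: right_diff_distrib sum_subtractf sum_divide_distrib)
  also have "\<dots> = mmul n shifted_laplacian shifted_inverse i j - (\<Sum>k\<in>V. shifted_inverse k j) / n"
    unfolding mmul_def shifted_laplacian_def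
    by (simp add: laplacian_row_sum distrib_right sum.distrib sum_divide_distrib)
  also have "\<dots> = centering n i j"
    using shifted_inverse(1) i j shifted_inverse_col_sum[OF j] by (simp add: mat_eq_on_def centering_def)
  finally show "mmul n Lap green i j = centering n i j" .
qed

lemma green_laplacian: "mat_eq_on n (mmul n green Lap) (centering n)"
proof -
  have "mtrans green = green" "mtrans Lap = Lap"
    by (simp_all add: fun_eq_iff mtrans_def green_sym laplacian_sym)
  hence "mmul n green Lap = mtrans (mmul n Lap green)"
    by (simp add: mtrans_mmul)
  thus ?thesis using laplacian_green by (auto simp: mat_eq_on_def mtrans_def centering_def mat_id_def)
qed

lemma is_pinv_green: "is_pinv n Lap green"
  unfolding is_pinv_iff
proof (intro conjI allI impI)
  fix i j :: nat assume "i \<notin> V \<or> j \<notin> V" thus "green i j = 0" by (auto simp: green_def)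
next
  show "mat_eq_on n (mmul n (mmul n Lap green) Lap) Lap"
    using mmul_cong_on[OF laplacian_green mat_eq_on_refl, of Lap]
    by (simp add: mat_eq_on_def mmul_centering_left laplacian_col_sum)
  show "mat_eq_on n (mmul n (mmul n green Lap) green) green"
    using mmul_cong_on[OF green_laplacian mat_eq_on_refl, of green]
    by (simp add: mat_eq_on_def mmul_centering_left green_col_sum)
  show "mat_eq_on n (mtrans (mmul n Lap green)) (mmul n Lap green)"
    using laplacian_green by (simp add: mat_eq_on_def mtrans_def centering_def mat_id_def)
  show "mat_eq_on n (mtrans (mmul n green Lap)) (mmul n green Lap)"
    using green_laplacian by (simp add: mat_eq_on_def mtrans_def centering_def mat_id_def)
qed

lemma pinv_laplacian: "pinv n Lap = green"
  unfolding pinv_def using is_pinv_green is_pinv_unique by blast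

text \<open>The electrical potential of a unit current entering at \<open>i\<close> and leaving at \<open>j\<close>,
  i.e. \<open>L\<^sup>\<dagger>(e\<^sub>i - e\<^sub>j)\<close>.\<close>

definition potential :: "nat \<Rightarrow> nat \<Rightarrow> nat \<Rightarrow> real" where
  "potential i j u = green u i - green u j"

lemma laplacian_potential:
  assumes "i \<in> V" "j \<in> V" "u \<in> V"
  shows "(\<Sum>v\<in>V. Lap u v * potential i j v) = ediff i j u"
proof -
  have "(\<Sum>v\<in>V. Lap u v * potential i j v) = mmul n Lap green u i - mmul n Lap green u j"
    unfolding mmul_def potential_def by (simp add: right_diff_distrib sum_subtractf)
  also have "\<dots> = ediff i j u"
    using laplacian_green assms by (simp add: mat_eq_on_def centering_def mat_id_def ediff_def)
  finally show ?thesis .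
qed

lemma eff_res_eq_energy:
  assumes i: "i \<in> V" and j: "j \<in> V"
  shows "eff_res n E i j = (\<Sum>e\<in>E. (grad (potential i j) e)\<^sup>2)"
proof -
  have "eff_res n E i j = (\<Sum>s\<in>V. ediff i j s * potential i j s)"
    unfolding eff_res_def pinv_laplacian potential_def
    by (intro sum.cong refl)
      (simp add: sum_distrib_left[symmetric] mult.assoc mult.commute[of "green _ _"] sum_ediff_mult[OF i j])
  also have "\<dots> = (\<Sum>s\<in>V. potential i j s * (\<Sum>v\<in>V. Lap s v * potential i j v))"
    using laplacian_potential[OF i j] by (simp add: mult.commute)
  also have "\<dots> = (\<Sum>e\<in>E. (grad (potential i j) e)\<^sup>2)"
    by (rule laplacian_quadratic_form)
  finally show ?thesis .
qed

lemma pair_seminorm_sq_eq: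
  assumes i: "i \<in> V" and j: "j \<in> V"
  shows "pair_seminorm_sq n E i j x = (\<Sum>e\<in>E. x e * grad (potential i j) e)\<^sup>2"
proof -
  have GQG: "mmul n (mmul n green (Qmat i j)) green u v = potential i j u * potential i j v" for u v
  proof -
    have "mmul n green (Qmat i j) u t = potential i j u * ediff i j t" for t
      unfolding mmul_def Qmat_def potential_def
      by (simp add: mult.assoc[symmetric] sum_distrib_right[symmetric] sum_ediff_mult[OF i j]
          mult.commute[of "green u _"])
    hence "mmul n (mmul n green (Qmat i j)) green u v = potential i j u * (\<Sum>t\<in>V. ediff i j t * green t v)"
      by (simp add: mmul_def sum_distrib_left mult_ac)
    thus ?thesis by (simp add: sum_ediff_mult[OF i j] potential_def green_sym)
  qed
  have "(\<Sum>u\<in>V. Bvec E x u * potential i j u) = (\<Sum>e\<in>E. x e * (\<Sum>u\<in>V. incidence E u e * potential i j u))"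
    unfolding Bvec_def sum_distrib_right sum_distrib_left by (subst sum.swap) (simp add: mult_ac)
  also have "\<dots> = (\<Sum>e\<in>E. x e * grad (potential i j) e)"
    by (simp add: sum_incidence_mult)
  moreover have "pair_seminorm_sq n E i j x = (\<Sum>u\<in>V. Bvec E x u * potential i j u)\<^sup>2"
    unfolding pair_seminorm_sq_def pinv_laplacian Let_def GQG
    by (simp add: power2_eq_square sum_product mult_ac)
  ultimately show ?thesis by simp
qed

lemma exists_lower_neighbour:
  assumes super: "0 \<le> (\<Sum>v\<in>V. Lap x v * \<psi> v)" and y: "adj E x y" "\<psi> x < \<psi> y"
  shows "\<exists>z. adj E x z \<and> \<psi> z < \<psi> x"
proof (rule ccontr)
  assume no_lower: "\<not> ?thesis"
  define g where "g e = incidence E x e * grad \<psi> e" for e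
  have g_nonpos: "g e \<le> 0" if e: "e \<in> E" for e
  proof -
    have "x = fst e \<Longrightarrow> adj E x (snd e)" "x = snd e \<Longrightarrow> adj E x (fst e)"
      using e by (auto simp: adj_def)
    thus ?thesis using no_lower e unfolding g_def incidence_mult_grad[OF e] by auto
  qed
  obtain e0 where e0: "e0 \<in> E" "g e0 < 0"
  proof (cases "(x, y) \<in> E")
    case True
    thus ?thesis using that[of "(x, y)"] y by (simp add: g_def incidence_mult_grad)
  next
    case False
    hence yx: "(y, x) \<in> E" using y by (auto simp: adj_def)
    hence "y \<noteq> x" using edge_endpoints[OF yx] by simp
    with yx show ?thesis using that[of "(y, x)"] y by (simp add: g_def incidence_mult_grad)
  qed
  have "(\<Sum>e\<in>E. g e) = g e0 + (\<Sum>e\<in>E - {e0}. g e)" using e0 by (simp add: sum.remove)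
  also have "\<dots> < 0" using e0(2) sum_nonpos[of "E - {e0}" g] g_nonpos by force
  finally show False using super by (simp add: g_def laplacian_mult)
qed

lemma exists_descending_path:
  assumes super: "\<And>x. x \<in> V \<Longrightarrow> x \<noteq> t \<Longrightarrow> 0 \<le> (\<Sum>v\<in>V. Lap x v * \<psi> v)"
  shows "x \<in> V \<Longrightarrow> x = t \<or> (\<exists>y. adj E x y \<and> \<psi> x < \<psi> y) \<Longrightarrow>
    \<exists>ps. ps \<noteq> [] \<and> hd ps = x \<and> last ps = t \<and>
         sorted_wrt (\<lambda>a b. \<psi> b < \<psi> a) ps \<and> successively (adj E) ps"
proof (induction "card {y\<in>V. \<psi> y < \<psi> x}" arbitrary: x rule: less_induct)
  case (less x)
  show ?case
  proof (cases "x = t")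
    case True thus ?thesis by (intro exI[of _ "[x]"]) auto
  next
    case False
    then obtain y where "adj E x y" "\<psi> x < \<psi> y" using less.prems by auto
    then obtain z where z: "adj E x z" "\<psi> z < \<psi> x"
      using exists_lower_neighbour super less.prems(1) False by blast
    have zV: "z \<in> V" using adj_in_verts[OF z(1)] by simp
    have "{y\<in>V. \<psi> y < \<psi> z} \<subset> {y\<in>V. \<psi> y < \<psi> x}" using z zV by auto
    hence "card {y\<in>V. \<psi> y < \<psi> z} < card {y\<in>V. \<psi> y < \<psi> x}" by (intro psubset_card_mono) auto
    moreover have "z = t \<or> (\<exists>y. adj E z y \<and> \<psi> z < \<psi> y)" using z adj_sym by blast
    ultimately obtain ps where ps: "ps \<noteq> []" "hd ps = z" "last ps = t"
        "sorted_wrt (\<lambda>a b. \<psi> b < \<psi> a) ps" "successively (adj E) ps"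
      using less.hyps zV by blast
    then obtain rest where rest: "ps = z # rest" by (cases ps) auto
    have "\<forall>b\<in>set ps. \<psi> b < \<psi> x" using ps(4) z(2) rest by auto
    thus ?thesis using ps rest z(1)
      by (intro exI[of _ "x # ps"]) (auto simp: successively_Cons)
  qed
qed

text \<open>An edge carrying current lies on a simple path from \<open>i\<close> to \<open>j\<close>: descend from its
  lower end to \<open>j\<close> and ascend from its upper end to \<open>i\<close>. The potential is superharmonic
  away from \<open>j\<close> and subharmonic away from \<open>i\<close>, so both paths exist, and since the
  potential is strictly monotone along their concatenation it is a simple path.\<close>

lemma grad_potential_nonzero_imp_path_edge:
  assumes i: "i \<in> V" and j: "j \<in> V" and e: "e \<in> E" and nz: "grad (potential i j) e \<noteq> 0"
  shows "e \<in> path_edges E i j"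
proof -
  define \<phi> where "\<phi> = potential i j"
  have super: "0 \<le> (\<Sum>v\<in>V. Lap x v * \<phi> v)" if "x \<in> V" "x \<noteq> j" for x
    using laplacian_potential[OF i j that(1)] that by (simp add: \<phi>_def ediff_def)
  have sub: "0 \<le> (\<Sum>v\<in>V. Lap x v * - \<phi> v)" if "x \<in> V" "x \<noteq> i" for x
    using laplacian_potential[OF i j that(1)] that by (simp add: \<phi>_def ediff_def sum_negf)
  obtain hi lo where hl: "adj E hi lo" "\<phi> lo < \<phi> hi" "e = (hi, lo) \<or> e = (lo, hi)"
  proof (cases "\<phi> (snd e) < \<phi> (fst e)")
    case True thus ?thesis using that[of "fst e" "snd e"] e by (auto simp: adj_def)
  next
    case False
    hence "\<phi> (fst e) < \<phi> (snd e)" using nz by (simp add: grad_def \<phi>_def)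
    thus ?thesis using that[of "snd e" "fst e"] e by (auto simp: adj_def)
  qed
  have hiV: "hi \<in> V" and loV: "lo \<in> V" using adj_in_verts[OF hl(1)] by auto
  obtain P2 where P2: "P2 \<noteq> []" "hd P2 = lo" "last P2 = j" "sorted_wrt (\<lambda>a b. \<phi> b < \<phi> a) P2"
      "successively (adj E) P2"
    using exists_descending_path[of j \<phi> lo, OF super loV] hl adj_sym by blast
  obtain P1' where P1': "P1' \<noteq> []" "hd P1' = hi" "last P1' = i"
      "sorted_wrt (\<lambda>a b. - \<phi> b < - \<phi> a) P1'" "successively (adj E) P1'"
    using exists_descending_path[of i "\<lambda>u. - \<phi> u" hi, OF sub hiV] hl by auto
  define P1 where "P1 = rev P1'"
  have P1: "P1 \<noteq> []" "hd P1 = i" "last P1 = hi" "sorted_wrt (\<lambda>a b. \<phi> b < \<phi> a) P1"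
      "successively (adj E) P1"
    using P1' by (auto simp: P1_def hd_rev last_rev sorted_wrt_rev adj_sym intro: successively_mono)
  have P1_above: "\<forall>x\<in>set P1. \<phi> hi \<le> \<phi> x"
  proof -
    have split: "P1 = butlast P1 @ [hi]" using P1(1,3) by (metis append_butlast_last_id)
    hence "\<forall>x\<in>set (butlast P1). \<phi> hi < \<phi> x" using P1(4) by (metis sorted_wrt_append list.set_intros(1))
    thus ?thesis by (subst split) auto
  qed
  have P2_below: "\<forall>y\<in>set P2. \<phi> y \<le> \<phi> lo"
  proof -
    obtain rest where "P2 = lo # rest" using P2(1,2) by (cases P2) auto
    thus ?thesis using P2(4) by auto
  qed
  define ps where "ps = P1 @ P2"
  have sorted: "sorted_wrt (\<lambda>a b. \<phi> b < \<phi> a) ps"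
    unfolding ps_def sorted_wrt_append using P1(4) P2(4) P1_above P2_below hl(2) by force
  moreover have "successively (adj E) ps"
    unfolding ps_def successively_append_iff using P1 P2 hl(1) by auto
  hence "simple_path E i j ps"
    unfolding simple_path_def using P1 P2 sorted_descending_distinct[OF sorted]
    by (auto simp: ps_def successively_conv_nth)
  moreover have "edge_on_path ps e"
    unfolding edge_on_path_def
  proof (intro exI[of _ "length P1 - 1"] conjI)
    have l: "length P1 \<ge> 1" using P1(1) by (cases P1) auto
    hence l': "Suc (length P1 - 1) = length P1" by simp
    show "Suc (length P1 - 1) < length ps" using l P2(1) by (cases P2) (auto simp: ps_def)
    have "ps ! (length P1 - 1) = hi"
      using l P1(1,3) by (simp add: ps_def nth_append last_conv_nth)
    moreover have "ps ! Suc (length P1 - 1) = lo"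
      unfolding l' using P2(1,2) by (simp add: ps_def nth_append hd_conv_nth)
    ultimately show "(ps ! (length P1 - 1), ps ! Suc (length P1 - 1)) = e \<or>
        (ps ! Suc (length P1 - 1), ps ! (length P1 - 1)) = e" using hl(3) by auto
  qed
  ultimately show ?thesis unfolding path_edges_def using e by blast
qed

lemma pair_seminorm_sq_le:
  assumes i: "i \<in> V" and j: "j \<in> V" and x: "\<And>e. e \<in> E \<Longrightarrow> \<bar>x e\<bar> \<le> B"
  shows "pair_seminorm_sq n E i j x \<le> eff_res n E i j * real (card (path_edges E i j)) * B\<^sup>2"
proof -
  define S where "S = path_edges E i j"
  have SE: "S \<subseteq> E" by (auto simp: S_def path_edges_def)
  have "(\<Sum>e\<in>E. x e * grad (potential i j) e) = (\<Sum>e\<in>S. x e * grad (potential i j) e)"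
    using grad_potential_nonzero_imp_path_edge[OF i j]
    by (intro sum.mono_neutral_right[OF finite_edges SE]) (auto simp: S_def)
  hence "pair_seminorm_sq n E i j x = (\<Sum>e\<in>S. x e * grad (potential i j) e)\<^sup>2"
    using pair_seminorm_sq_eq[OF i j] by simp
  also have "\<dots> \<le> (\<Sum>e\<in>S. (x e)\<^sup>2) * (\<Sum>e\<in>S. (grad (potential i j) e)\<^sup>2)"
    by (rule Cauchy_Schwarz_ineq_sum)
  also have "\<dots> \<le> (real (card S) * B\<^sup>2) * (\<Sum>e\<in>E. (grad (potential i j) e)\<^sup>2)"
  proof (intro mult_mono)
    have "(x e)\<^sup>2 \<le> B\<^sup>2" if "e \<in> S" for e
      using x[of e] that SE by (metis abs_ge_zero power2_abs power_mono subsetD order_trans)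
    thus "(\<Sum>e\<in>S. (x e)\<^sup>2) \<le> real (card S) * B\<^sup>2"
      using sum_mono[of S "\<lambda>e. (x e)\<^sup>2" "\<lambda>_. B\<^sup>2"] by simp
    show "(\<Sum>e\<in>S. (grad (potential i j) e)\<^sup>2) \<le> (\<Sum>e\<in>E. (grad (potential i j) e)\<^sup>2)"
      using SE by (intro sum_mono2) auto
  qed (auto intro: sum_nonneg)
  also have "\<dots> = eff_res n E i j * real (card S) * B\<^sup>2"
    using eff_res_eq_energy[OF i j] by simp
  finally show ?thesis by (simp add: S_def)
qed

lemma one_le_path_edges_max:
  assumes e: "e \<in> E" shows "1 \<le> path_edges_max n E"
proof -
  obtain a c where ac: "e = (a, c)" by (cases e)
  have a: "a \<in> V" and c: "c \<in> V" and "a \<noteq> c" using edge_endpoints[OF e] ac by auto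
  hence "simple_path E a c [a, c]" using e ac by (simp add: simple_path_def adj_def nth_Cons')
  moreover have "edge_on_path [a, c] e" unfolding edge_on_path_def using ac by (intro exI[of _ 0]) simp
  ultimately have "e \<in> path_edges E a c" using e by (auto simp: path_edges_def)
  moreover have "finite (path_edges E a c)" by (rule finite_subset[of _ E]) (auto simp: path_edges_def)
  ultimately have "1 \<le> card (path_edges E a c)" by (metis One_nat_def Suc_leI card_gt_0_iff empty_iff)
  also have "\<dots> \<le> path_edges_max n E"
  proof -
    have "{card (path_edges E i j) |i j. i \<in> V \<and> j \<in> V} = (\<lambda>(i, j). card (path_edges E i j)) ` (V \<times> V)"
      by auto
    thus ?thesis unfolding path_edges_max_def using a c by (intro Max_ge) auto
  qed
  finally show ?thesis .
qed

end

section \<open>Concentration of the pair seminorms\<close>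

lemma log_confidence_bounds:
  fixes n \<delta> C :: real
  assumes n: "1 \<le> n" and \<delta>: "0 < \<delta>" "\<delta> \<le> exp (-1)" and C: "ln (n / \<delta>) \<le> C"
  shows "1 \<le> C" "0 \<le> ln (2 * n\<^sup>2 / \<delta>)" "ln (2 * n\<^sup>2 / \<delta>) \<le> 3 * C"
    and "n\<^sup>2 * (2 * exp (- ln (2 * n\<^sup>2 / \<delta>))) = \<delta>"
proof -
  have "ln \<delta> \<le> -1" using \<delta> by (metis exp_gt_zero ln_exp ln_le_cancel_iff)
  moreover have "0 \<le> ln n" using n by simp
  moreover have "ln (n / \<delta>) = ln n - ln \<delta>" using n \<delta> by (simp add: ln_div)
  moreover have "ln (2 * n\<^sup>2 / \<delta>) = ln 2 + 2 * ln n - ln \<delta>"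
    using n \<delta> by (simp add: ln_div ln_mult ln_realpow)
  moreover have "0 < ln (2::real)" "ln (2::real) < 1" using ln_2_less_1 by simp_all
  ultimately show "1 \<le> C" "0 \<le> ln (2 * n\<^sup>2 / \<delta>)" "ln (2 * n\<^sup>2 / \<delta>) \<le> 3 * C"
    using C by linarith+
  show "n\<^sup>2 * (2 * exp (- ln (2 * n\<^sup>2 / \<delta>))) = \<delta>"
    using n \<delta> by (simp add: exp_minus inverse_eq_divide)
qed

lemma enough_comparisons:
  assumes pos: "w (fst e) > 0" "w (snd e) > 0"
    and ratio: "w (fst e) / w (snd e) \<le> b" "w (snd e) / w (fst e) \<le> b"
    and L: "L \<le> 3 * C" and k: "192 * b * C \<le> real k"
  shows "16 * L \<le> k * win_prob w e * (1 - win_prob w e)"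
proof -
  have "0 < b" using less_le_trans[OF divide_pos_pos[OF pos] ratio(1)] .
  hence "16 * L \<le> (192 * b * C) * (1 / (4 * b))" using L by simp
  also have "\<dots> \<le> real k * (win_prob w e * (1 - win_prob w e))"
    using k \<open>0 < b\<close> win_prob_variance_ge[OF pos ratio] by (intro mult_mono) auto
  finally show ?thesis by (simp add: mult.assoc)
qed

lemma abs_Delta_le_balanced:
  assumes pos: "w (fst e) > 0" "w (snd e) > 0"
    and ratio: "w (fst e) / w (snd e) \<le> b" "w (snd e) / w (fst e) \<le> b"
    and k: "k > 0" and L: "0 \<le> L" "L \<le> 3 * C" and kC: "192 * b * C \<le> real k"
    and concentrated: "(real (X e) - k * win_prob w e)\<^sup>2 \<le> 4 * (k * win_prob w e * (1 - win_prob w e)) * L"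
  shows "\<bar>Delta w k X e\<bar> \<le> 192 * b * C / k"
proof -
  have "0 < b" using less_le_trans[OF divide_pos_pos[OF pos] ratio(1)] .
  have "\<bar>Delta w k X e\<bar> \<le> 16 * L / (k * (win_prob w e * (1 - win_prob w e)))"
    using abs_Delta_le[where X = X, OF pos k enough_comparisons[OF pos ratio L(2) kC] concentrated] .
  also have "\<dots> \<le> 16 * L / (k * (1 / (4 * b)))"
  proof -
    define v where "v = win_prob w e * (1 - win_prob w e)"
    have "1 / (4 * b) \<le> v" unfolding v_def by (rule win_prob_variance_ge[OF pos ratio])
    moreover have "0 < 1 / (4 * b)" using \<open>0 < b\<close> by simp
    ultimately have "0 < v" by linarith
    have "16 * L / (k * v) \<le> 16 * L / (k * (1 / (4 * b)))"
      using \<open>1 / (4 * b) \<le> v\<close> \<open>0 < v\<close> \<open>0 < b\<close> L(1) k by (intro divide_left_mono mult_left_mono) auto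
    thus ?thesis by (simp add: v_def)
  qed
  also have "\<dots> = 64 * b * L / k"
    using \<open>0 < b\<close> k by (simp add: field_simps)
  also have "\<dots> \<le> 64 * b * (3 * C) / k"
    using L(2) \<open>0 < b\<close> by (intro divide_right_mono mult_left_mono) auto
  finally show ?thesis by simp
qed

theorem (in connected_oriented_graph) Delta_pair_seminorm_concentration:
  assumes w: "\<forall>i\<in>V. w i > 0" and b: "\<forall>i\<in>V. \<forall>j\<in>V. w i / w j \<le> b"
    and \<delta>: "0 < \<delta>" "\<delta> \<le> exp (-1)" and C: "ln (real n / \<delta>) \<le> C" and k: "k > 0"
    and k_large: "192 * b * (C + 1) * max (eff_res_max n E) (real (path_edges_max n E)) \<le> real k"
  shows "1 - \<delta> \<le> measure_pmf.prob (comparisons E w k)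
           {X. \<forall>i\<in>V. \<forall>j\<in>V. pair_seminorm_sq n E i j (Delta w k X)
                 \<le> 36864 * eff_res n E i j * real (card (path_edges E i j)) * b\<^sup>2 * C\<^sup>2 / (real k)\<^sup>2}"
proof -
  define L where "L = ln (2 * (real n)\<^sup>2 / \<delta>)"
  have L: "1 \<le> C" "0 \<le> L" "L \<le> 3 * C" "(real n)\<^sup>2 * (2 * exp (- L)) = \<delta>"
    using log_confidence_bounds[of "real n" \<delta> C, folded L_def] n_pos \<delta> C by simp_all
  have "1 \<in> V" using n_pos by (simp add: verts_def)
  hence "1 \<le> b" using w b by fastforce
  have edge: "w (fst e) > 0 \<and> w (snd e) > 0 \<and> w (fst e) / w (snd e) \<le> b \<and> w (snd e) / w (fst e) \<le> b
      \<and> 192 * b * C \<le> real k" if "e \<in> E" for e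
  proof -
    have "192 * b * C \<le> 192 * b * (C + 1) * 1" using \<open>1 \<le> b\<close> by simp
    also have "\<dots> \<le> 192 * b * (C + 1) * max (eff_res_max n E) (real (path_edges_max n E))"
      using one_le_path_edges_max[OF that] \<open>1 \<le> b\<close> L(1) by (intro mult_left_mono) auto
    finally show ?thesis using edge_endpoints[OF that] w b k_large by auto
  qed
  let ?good = "{X. \<forall>e\<in>E. (real (X e) - k * win_prob w e)\<^sup>2 \<le> 4 * (k * win_prob w e * (1 - win_prob w e)) * L}"
  have "real (card E) \<le> (real n)\<^sup>2"
    using card_mono[OF _ edges_subset] by (simp add: power2_eq_square flip: of_nat_mult)
  hence "1 - \<delta> \<le> 1 - card E * (2 * exp (- L))"
    using mult_right_mono[of "real (card E)" "(real n)\<^sup>2" "2 * exp (- L)"] L(4) by simp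
  also have "\<dots> \<le> measure_pmf.prob (comparisons E w k) ?good"
    using edge L(2,3) enough_comparisons[of w _ b L C k]
    by (intro prob_all_edges_concentrated[OF finite_edges _ k L(2)]) force+
  also have "\<dots> \<le> measure_pmf.prob (comparisons E w k)
           {X. \<forall>i\<in>V. \<forall>j\<in>V. pair_seminorm_sq n E i j (Delta w k X)
                 \<le> 36864 * eff_res n E i j * real (card (path_edges E i j)) * b\<^sup>2 * C\<^sup>2 / (real k)\<^sup>2}"
  proof (intro measure_pmf.finite_measure_mono subsetI CollectI ballI)
    fix X i j assume X: "X \<in> ?good" and i: "i \<in> V" and j: "j \<in> V"
    have "\<bar>Delta w k X e\<bar> \<le> 192 * b * C / k" if "e \<in> E" for e
      using X that edge[OF that] k L(2,3) by (intro abs_Delta_le_balanced) auto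
    hence "pair_seminorm_sq n E i j (Delta w k X)
        \<le> eff_res n E i j * real (card (path_edges E i j)) * (192 * b * C / k)\<^sup>2"
      by (rule pair_seminorm_sq_le[OF i j])
    thus "pair_seminorm_sq n E i j (Delta w k X)
        \<le> 36864 * eff_res n E i j * real (card (path_edges E i j)) * b\<^sup>2 * C\<^sup>2 / (real k)\<^sup>2"
      by (simp add: power_divide power_mult_distrib mult_ac)
  qed simp
  finally show ?thesis .
qed

theorem corollary1:
  "\<exists>c1 c2 C0 :: real. c1 > 0 \<and> c2 > 0 \<and> C0 > 0 \<and>
    (\<forall>(n::nat) (E::(nat \<times> nat) set) (w::nat \<Rightarrow> real) (b::real) (k::nat) (\<delta>::real) (C::real).
       oriented_simple_graph n E \<longrightarrow> graph_connected n E \<longrightarrow> n \<ge> 1 \<longrightarrow>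
       (\<forall>i\<in>verts n. w i > 0) \<longrightarrow>
       (\<forall>i\<in>verts n. \<forall>j\<in>verts n. w i / w j \<le> b) \<longrightarrow>
       0 < \<delta> \<longrightarrow> \<delta> \<le> exp (-1) \<longrightarrow>
       C \<ge> c1 * ln (real n / \<delta>) \<longrightarrow>
       k > 0 \<longrightarrow>
       real k \<ge> c2 * b * (C + 1) * max (eff_res_max n E) (real (path_edges_max n E)) \<longrightarrow>
       measure_pmf.prob (comparisons E w k)
         {X. \<forall>i\<in>verts n. \<forall>j\<in>verts n.
               pair_seminorm_sq n E i j (Delta w k X)
                 \<le> C0 * eff_res n E i j * real (card (path_edges E i j)) * b\<^sup>2 * C\<^sup>2 / (real k)\<^sup>2}
         \<ge> 1 - \<delta>)"
proof (rule exI[of _ 1], rule exI[of _ 192], rule exI[of _ 36864], intro conjI allI impI)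
  fix n E w b k \<delta> C
  assume graph: "oriented_simple_graph n E" "graph_connected n E" "n \<ge> 1"
    and hyps: "\<forall>i\<in>verts n. w i > 0" "\<forall>i\<in>verts n. \<forall>j\<in>verts n. w i / w j \<le> b"
      "0 < \<delta>" "\<delta> \<le> exp (-1)" "C \<ge> 1 * ln (real n / \<delta>)" "k > 0"
      "real k \<ge> 192 * b * (C + 1) * max (eff_res_max n E) (real (path_edges_max n E))"
  interpret connected_oriented_graph n E using graph by unfold_locales
  show "measure_pmf.prob (comparisons E w k)
         {X. \<forall>i\<in>verts n. \<forall>j\<in>verts n.
               pair_seminorm_sq n E i j (Delta w k X)
                 \<le> 36864 * eff_res n E i j * real (card (path_edges E i j)) * b\<^sup>2 * C\<^sup>2 / (real k)\<^sup>2}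
         \<ge> 1 - \<delta>"
    using Delta_pair_seminorm_concentration[OF hyps(1,2,3,4) _ hyps(6,7)] hyps(5) by simp
qed simp_all

end
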